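(* Let $R$ be any binary relation on $U$. Then $(\mathcal J_p(\wp(U)^{\vartriangle}),\subseteq)\cong(\mathcal J_p(\wp(U)^{\blacktriangle}),\supseteq)$. More precisely, the map $\varphi\colon R(x)\mapsto\breve R(w_x)$, where $w_x$ is any element of $\mathfrak{core}R(x)$, is a well-defined bijection $\mathcal J_p(\wp(U)^{\vartriangle})\to\mathcal J_p(\wp(U)^{\blacktriangle})$ which reverses inclusion, and its inverse is $\breve R(y)\mapsto R(w_y)$ with $w_y$ any element of $\mathfrak{core}\breve R(y)$, also inclusion-reversing.
   Context: Let $U$ be a set and $R\subseteq U\times U$ a binary relation. For $x\in U$, $R(x)=\{y\in U\mid (x,y)\in R\}$ and $\breve R(x)=\{y\in U\mid (y,x)\in R\}$. $\mathfrak{core}R(x)=\{w\in R(x)\mid \text{for all }y\in U,\ w\in R(y)\text{ implies }R(x)\subseteq R(y)\}$, and $\mathfrak{core}\breve R(x)$ is defined likewise with $\breve R$ in place of $R$. For $X\subseteq U$: $X^{\blacktriangle}=\{x\in U\mid R(x)\cap X\neq\emptyset\}$ and $X^{\vartriangle}=\{x\in U\mid \breve R(x)\cap X\neq\emptyset\}$, so $\{x\}^{\vartriangle}=R(x)$, $\{x\}^{\blacktriangle}=\breve R(x)$. $\wp(U)^{\blacktriangle}=\{X^{\blacktriangle}\mid X\subseteq U\}$, $\wp(U)^{\vartriangle}=\{X^{\vartriangle}\mid X\subseteq U\}$, complete lattices under $\subseteq$ with joins given by unions. An element $p$ of a complete lattice $L$ is completely join-prime if $p\le\bigvee X$ implies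 $p\le x$ for some $x\in X$, for every $X\subseteq L$; $\mathcal J_p(L)$ denotes the set of completely join-prime elements. *)

theory Defs
  imports Main
begin

text \<open>R(x) = {y. (x,y) \<in> R}; the inverse neighbourhood is Rn (converse R) x.\<close>
definition Rn :: "('a \<times> 'a) set \<Rightarrow> 'a \<Rightarrow> 'a set" where
  "Rn R x = {y. (x, y) \<in> R}"

definition core :: "'a set \<Rightarrow> ('a \<times> 'a) set \<Rightarrow> 'a \<Rightarrow> 'a set" where
  "core U R x = {w \<in> Rn R x. \<forall>y\<in>U. w \<in> Rn R y \<longrightarrow> Rn R x \<subseteq> Rn R y}"

definition upperB :: "'a set \<Rightarrow> ('a \<times> 'a) set \<Rightarrow> 'a set \<Rightarrow> 'a set" where
  "upperB U R X = {x \<in> U. Rn R x \<inter> X \<noteq> {}}"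

definition upperV :: "'a set \<Rightarrow> ('a \<times> 'a) set \<Rightarrow> 'a set \<Rightarrow> 'a set" where
  "upperV U R X = {x \<in> U. Rn (converse R) x \<inter> X \<noteq> {}}"

definition famB :: "'a set \<Rightarrow> ('a \<times> 'a) set \<Rightarrow> 'a set set" where
  "famB U R = {upperB U R X | X. X \<subseteq> U}"

definition famV :: "'a set \<Rightarrow> ('a \<times> 'a) set \<Rightarrow> 'a set set" where
  "famV U R = {upperV U R X | X. X \<subseteq> U}"

text \<open>Completely join-prime elements of a family of sets ordered by inclusion,
  whose joins are unions.\<close>
definition Jp :: "'a set set \<Rightarrow> 'a set set" where
  "Jp L = {p \<in> L. \<forall>X \<subseteq> L. p \<subseteq> \<Union>X \<longrightarrow> (\<exists>x\<in>X. p \<subseteq> x)}"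

end

theory Submission
  imports Defs
begin

text \<open>Since \<open>X\<^sup>\<vartriangle>\<close> is the union of the neighbourhoods \<open>R(x)\<close>, \<open>x \<in> X\<close>, a completely
  join-prime element of \<open>\<wp>(U)\<^sup>\<vartriangle>\<close> is a single neighbourhood \<open>R(x)\<close>, and such an \<open>R(x)\<close> is
  join-prime exactly when some \<open>w \<in> R(x)\<close> lies only in neighbourhoods containing \<open>R(x)\<close>,
  i.e. when \<open>core R(x) \<noteq> {}\<close>. For \<open>w \<in> core R(x)\<close> one checks \<open>x \<in> core R\<^sup>\<smile>(w)\<close>, and
  \<open>R(x) \<subseteq> R(x')\<close> iff \<open>R\<^sup>\<smile>(w') \<subseteq> R\<^sup>\<smile>(w)\<close> for core elements \<open>w, w'\<close>. Hence \<open>R(x) \<mapsto> R\<^sup>\<smile>(w)\<close>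
  is well defined and antitone, and the same construction for \<open>R\<^sup>\<smile>\<close> inverts it.\<close>

lemma JpD:
  assumes "p \<in> Jp L" "X \<subseteq> L" "p \<subseteq> \<Union>X"
  obtains x where "x \<in> X" "p \<subseteq> x"
  using assms unfolding Jp_def by blast

lemma JpI:
  assumes "p \<in> L" "\<And>X. X \<subseteq> L \<Longrightarrow> p \<subseteq> \<Union>X \<Longrightarrow> \<exists>x\<in>X. p \<subseteq> x"
  shows "p \<in> Jp L"
  using assms unfolding Jp_def by blast

lemma Jp_subset: "Jp L \<subseteq> L"
  unfolding Jp_def by blast

lemma famB_eq_famV_converse: "famB U R = famV U (converse R)"
  unfolding famB_def famV_def upperB_def upperV_def by simp

lemma upperV_eq_UN_Rn:
  assumes "R \<subseteq> U \<times> U" "X \<subseteq> U"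
  shows "upperV U R X = (\<Union>x\<in>X. Rn R x)"
  using assms unfolding upperV_def Rn_def by auto

lemma Rn_in_famV:
  assumes "R \<subseteq> U \<times> U" "x \<in> U"
  shows "Rn R x \<in> famV U R"
proof -
  have "upperV U R {x} = Rn R x" using upperV_eq_UN_Rn[OF assms(1), of "{x}"] assms(2) by simp
  then show ?thesis unfolding famV_def using assms(2) by blast
qed

lemma core_in_Rn: "w \<in> core U R x \<Longrightarrow> w \<in> Rn R x"
  unfolding core_def by auto

lemma core_in_U: "R \<subseteq> U \<times> U \<Longrightarrow> w \<in> core U R x \<Longrightarrow> w \<in> U"
  unfolding core_def Rn_def by auto

lemma Jp_famV_obtain_Rn:
  assumes RU: "R \<subseteq> U \<times> U" and p: "p \<in> Jp (famV U R)"
  obtains x where "x \<in> U" "p = Rn R x"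
proof -
  from p Jp_subset obtain X where "X \<subseteq> U" "p = upperV U R X"
    unfolding famV_def by blast
  then have X: "X \<subseteq> U" "p = (\<Union>x\<in>X. Rn R x)" using upperV_eq_UN_Rn[OF RU] by simp_all
  moreover have "Rn R ` X \<subseteq> famV U R" using Rn_in_famV[OF RU] X(1) by blast
  ultimately obtain x where "x \<in> X" "p \<subseteq> Rn R x" using JpD[OF p] by (metis image_iff equalityD1)
  with X that show thesis by blast
qed

lemma core_nonempty_if_Rn_in_Jp:
  assumes RU: "R \<subseteq> U \<times> U" and x: "Rn R x \<in> Jp (famV U R)"
  shows "core U R x \<noteq> {}"
proof
  assume "core U R x = {}"
  then have "\<forall>w\<in>Rn R x. \<exists>y\<in>U. w \<in> Rn R y \<and> \<not> Rn R x \<subseteq> Rn R y"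
    unfolding core_def by blast
  then obtain f where f: "\<And>w. w \<in> Rn R x \<Longrightarrow> f w \<in> U \<and> w \<in> Rn R (f w) \<and> \<not> Rn R x \<subseteq> Rn R (f w)"
    by metis
  let ?Y = "(\<lambda>w. Rn R (f w)) ` Rn R x"
  have "?Y \<subseteq> famV U R" using f Rn_in_famV[OF RU] by auto
  moreover have "Rn R x \<subseteq> \<Union>?Y" using f by blast
  ultimately obtain S where "S \<in> ?Y" "Rn R x \<subseteq> S" by (rule JpD[OF x])
  with f show False by blast
qed

lemma Rn_in_Jp_if_core_nonempty:
  assumes RU: "R \<subseteq> U \<times> U" and xU: "x \<in> U" and w: "w \<in> core U R x"
  shows "Rn R x \<in> Jp (famV U R)"
proof (rule JpI)
  show "Rn R x \<in> famV U R" using Rn_in_famV[OF RU xU] .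
next
  fix X assume X: "X \<subseteq> famV U R" and cover: "Rn R x \<subseteq> \<Union>X"
  from cover core_in_Rn[OF w] obtain S where S: "S \<in> X" "w \<in> S" by blast
  then obtain Y where Y: "Y \<subseteq> U" "S = upperV U R Y" using X unfolding famV_def by blast
  then have "S = (\<Union>y\<in>Y. Rn R y)" using upperV_eq_UN_Rn[OF RU] by simp
  with S obtain y where "y \<in> Y" "w \<in> Rn R y" "Rn R y \<subseteq> S" by blast
  with w Y(1) have "Rn R x \<subseteq> S" unfolding core_def by blast
  with S show "\<exists>S\<in>X. Rn R x \<subseteq> S" by blast
qed

lemma Jp_famV_eq:
  assumes "R \<subseteq> U \<times> U"
  shows "Jp (famV U R) = {Rn R x | x. x \<in> U \<and> core U R x \<noteq> {}}"
proof (intro equalityI subsetI)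
  fix p assume p: "p \<in> Jp (famV U R)"
  then obtain x where "x \<in> U" "p = Rn R x" by (rule Jp_famV_obtain_Rn[OF assms])
  with p core_nonempty_if_Rn_in_Jp[OF assms] show "p \<in> {Rn R x | x. x \<in> U \<and> core U R x \<noteq> {}}"
    by blast
next
  fix p assume "p \<in> {Rn R x | x. x \<in> U \<and> core U R x \<noteq> {}}"
  then obtain x w where "x \<in> U" "p = Rn R x" "w \<in> core U R x" by blast
  then show "p \<in> Jp (famV U R)" using Rn_in_Jp_if_core_nonempty[OF assms] by blast
qed

lemma core_least:
  "w \<in> core U R x \<Longrightarrow> y \<in> U \<Longrightarrow> w \<in> Rn R y \<Longrightarrow> Rn R x \<subseteq> Rn R y"
  unfolding core_def by blast

lemma in_core_converse:
  assumes RU: "R \<subseteq> U \<times> U" and w: "w \<in> core U R x"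
  shows "x \<in> core U (converse R) w"
  unfolding core_def
proof (intro CollectI conjI ballI impI)
  from core_in_Rn[OF w] show "x \<in> Rn (converse R) w" by (simp add: Rn_def)
next
  fix y assume "x \<in> Rn (converse R) y"
  then have "y \<in> Rn R x" by (simp add: Rn_def)
  show "Rn (converse R) w \<subseteq> Rn (converse R) y"
  proof
    fix z assume "z \<in> Rn (converse R) w"
    then have "z \<in> U" "w \<in> Rn R z" using RU by (auto simp: Rn_def)
    then have "Rn R x \<subseteq> Rn R z" by (rule core_least[OF w])
    with \<open>y \<in> Rn R x\<close> have "y \<in> Rn R z" by blast
    then show "z \<in> Rn (converse R) y" by (simp add: Rn_def)
  qed
qed

lemma Rn_subset_iff_core_Rn_converse_subset:
  assumes RU: "R \<subseteq> U \<times> U" and w: "w \<in> core U R x" and w': "w' \<in> core U R x'"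
    and x'U: "x' \<in> U"
  shows "Rn R x \<subseteq> Rn R x' \<longleftrightarrow> Rn (converse R) w' \<subseteq> Rn (converse R) w"
proof
  assume le: "Rn R x \<subseteq> Rn R x'"
  show "Rn (converse R) w' \<subseteq> Rn (converse R) w"
  proof
    fix z assume "z \<in> Rn (converse R) w'"
    then have "z \<in> U" "w' \<in> Rn R z" using RU by (auto simp: Rn_def)
    then have "Rn R x' \<subseteq> Rn R z" by (rule core_least[OF w'])
    with le core_in_Rn[OF w] have "w \<in> Rn R z" by blast
    then show "z \<in> Rn (converse R) w" by (simp add: Rn_def)
  qed
next
  assume "Rn (converse R) w' \<subseteq> Rn (converse R) w"
  moreover note core_in_Rn[OF w']
  ultimately have "w \<in> Rn R x'" by (auto simp: Rn_def)
  then show "Rn R x \<subseteq> Rn R x'" by (rule core_least[OF w x'U])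
qed

text \<open>The map \<open>\<phi>\<close> of the theorem (for \<open>R\<^sup>\<smile>\<close> its inverse \<open>\<psi>\<close>); it is only meaningful on
  neighbourhoods with nonempty core, elsewhere \<open>SOME\<close> picks an arbitrary point.\<close>
definition core_dual :: "'a set \<Rightarrow> ('a \<times> 'a) set \<Rightarrow> 'a set \<Rightarrow> 'a set" where
  "core_dual U R p = Rn (converse R) (SOME w. \<exists>x\<in>U. p = Rn R x \<and> w \<in> core U R x)"

lemma core_dual_Rn:
  assumes RU: "R \<subseteq> U \<times> U" and xU: "x \<in> U" and w: "w \<in> core U R x"
  shows "core_dual U R (Rn R x) = Rn (converse R) w"
proof -
  let ?P = "\<lambda>w. \<exists>x'\<in>U. Rn R x = Rn R x' \<and> w \<in> core U R x'"
  have "?P w" using xU w by blast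
  then have "?P (SOME w. ?P w)" by (rule someI)
  then obtain x' where x': "x' \<in> U" "Rn R x = Rn R x'" "(SOME w. ?P w) \<in> core U R x'" by blast
  have "Rn (converse R) (SOME w. ?P w) \<subseteq> Rn (converse R) w"
    using Rn_subset_iff_core_Rn_converse_subset[OF RU w x'(3) x'(1)] x'(2) by simp
  moreover have "Rn (converse R) w \<subseteq> Rn (converse R) (SOME w. ?P w)"
    using Rn_subset_iff_core_Rn_converse_subset[OF RU x'(3) w xU] x'(2) by simp
  ultimately show ?thesis unfolding core_dual_def by blast
qed

lemma Jp_famV_obtain_core:
  assumes "R \<subseteq> U \<times> U" "p \<in> Jp (famV U R)"
  obtains x w where "x \<in> U" "p = Rn R x" "w \<in> core U R x"
proof -
  obtain x where x: "x \<in> U" "p = Rn R x" using Jp_famV_obtain_Rn[OF assms] .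
  with assms have "core U R x \<noteq> {}" using core_nonempty_if_Rn_in_Jp by simp
  then obtain w where "w \<in> core U R x" by blast
  with x show thesis by (rule that)
qed

lemma core_dual_in_Jp_converse:
  assumes RU: "R \<subseteq> U \<times> U" and p: "p \<in> Jp (famV U R)"
  shows "core_dual U R p \<in> Jp (famV U (converse R))"
proof -
  obtain x w where x: "x \<in> U" "p = Rn R x" and w: "w \<in> core U R x"
    using Jp_famV_obtain_core[OF RU p] .
  have "converse R \<subseteq> U \<times> U" using RU by auto
  from Rn_in_Jp_if_core_nonempty[OF this core_in_U[OF RU w] in_core_converse[OF RU w]]
  show ?thesis using core_dual_Rn[OF RU x(1) w] x(2) by simp
qed

lemma core_dual_converse_core_dual:
  assumes RU: "R \<subseteq> U \<times> U" and p: "p \<in> Jp (famV U R)"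
  shows "core_dual U (converse R) (core_dual U R p) = p"
proof -
  obtain x w where x: "x \<in> U" "p = Rn R x" and w: "w \<in> core U R x"
    using Jp_famV_obtain_core[OF RU p] .
  have "converse R \<subseteq> U \<times> U" using RU by auto
  from core_dual_Rn[OF this core_in_U[OF RU w] in_core_converse[OF RU w]]
  show ?thesis using core_dual_Rn[OF RU x(1) w] x(2) by simp
qed

lemma bij_betw_core_dual:
  assumes RU: "R \<subseteq> U \<times> U"
  shows "bij_betw (core_dual U R) (Jp (famV U R)) (Jp (famV U (converse R)))"
proof (rule bij_betw_byWitness[where f' = "core_dual U (converse R)"])
  have R'U: "converse R \<subseteq> U \<times> U" using RU by auto
  show "\<forall>p\<in>Jp (famV U R). core_dual U (converse R) (core_dual U R p) = p"
    using core_dual_converse_core_dual[OF RU] by blast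
  show "\<forall>q\<in>Jp (famV U (converse R)). core_dual U R (core_dual U (converse R) q) = q"
    using core_dual_converse_core_dual[OF R'U] by simp
  show "core_dual U R ` Jp (famV U R) \<subseteq> Jp (famV U (converse R))"
    using core_dual_in_Jp_converse[OF RU] by blast
  show "core_dual U (converse R) ` Jp (famV U (converse R)) \<subseteq> Jp (famV U R)"
    using core_dual_in_Jp_converse[OF R'U] by auto
qed

lemma core_dual_antimono_iff:
  assumes RU: "R \<subseteq> U \<times> U" and p: "p \<in> Jp (famV U R)" and p': "p' \<in> Jp (famV U R)"
  shows "p \<subseteq> p' \<longleftrightarrow> core_dual U R p' \<subseteq> core_dual U R p"
proof -
  obtain x w where x: "x \<in> U" "p = Rn R x" and w: "w \<in> core U R x"
    using Jp_famV_obtain_core[OF RU p] .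
  obtain x' w' where x': "x' \<in> U" "p' = Rn R x'" and w': "w' \<in> core U R x'"
    using Jp_famV_obtain_core[OF RU p'] .
  show ?thesis
    using Rn_subset_iff_core_Rn_converse_subset[OF RU w w' x'(1)]
      core_dual_Rn[OF RU x(1) w] core_dual_Rn[OF RU x'(1) w'] x(2) x'(2) by simp
qed

theorem mainTheorem9:
  fixes U :: "'a set" and R :: "('a \<times> 'a) set"
  assumes "R \<subseteq> U \<times> U"
  shows "\<exists>\<phi> \<psi>.
     (\<forall>p\<in>Jp (famV U R). \<exists>x\<in>U. p = Rn R x \<and> core U R x \<noteq> {}) \<and>
     (\<forall>q\<in>Jp (famB U R). \<exists>y\<in>U. q = Rn (converse R) y \<and> core U (converse R) y \<noteq> {}) \<and>
     (\<forall>x\<in>U. \<forall>w. Rn R x \<in> Jp (famV U R) \<longrightarrow> w \<in> core U R x \<longrightarrow>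
          \<phi> (Rn R x) = Rn (converse R) w) \<and>
     (\<forall>y\<in>U. \<forall>w. Rn (converse R) y \<in> Jp (famB U R) \<longrightarrow> w \<in> core U (converse R) y \<longrightarrow>
          \<psi> (Rn (converse R) y) = Rn R w) \<and>
     bij_betw \<phi> (Jp (famV U R)) (Jp (famB U R)) \<and>
     bij_betw \<psi> (Jp (famB U R)) (Jp (famV U R)) \<and>
     (\<forall>p\<in>Jp (famV U R). \<psi> (\<phi> p) = p) \<and>
     (\<forall>q\<in>Jp (famB U R). \<phi> (\<psi> q) = q) \<and>
     (\<forall>p\<in>Jp (famV U R). \<forall>p'\<in>Jp (famV U R). p \<subseteq> p' \<longleftrightarrow> \<phi> p' \<subseteq> \<phi> p) \<and>
     (\<forall>q\<in>Jp (famB U R). \<forall>q'\<in>Jp (famB U R). q \<subseteq> q' \<longleftrightarrow> \<psi> q' \<subseteq> \<psi> q)"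
proof -
  let ?R' = "converse R"
  have R'U: "?R' \<subseteq> U \<times> U" using assms by auto
  have rep: "\<forall>p\<in>Jp (famV U R). \<exists>x\<in>U. p = Rn R x \<and> core U R x \<noteq> {}"
    "\<forall>q\<in>Jp (famV U ?R'). \<exists>y\<in>U. q = Rn ?R' y \<and> core U ?R' y \<noteq> {}"
    by (simp_all add: Jp_famV_eq[OF assms] Jp_famV_eq[OF R'U]) blast+
  have val: "\<forall>x\<in>U. \<forall>w. Rn R x \<in> Jp (famV U R) \<longrightarrow> w \<in> core U R x \<longrightarrow>
      core_dual U R (Rn R x) = Rn ?R' w"
    "\<forall>y\<in>U. \<forall>w. Rn ?R' y \<in> Jp (famV U ?R') \<longrightarrow> w \<in> core U ?R' y \<longrightarrow>
      core_dual U ?R' (Rn ?R' y) = Rn R w"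
    using core_dual_Rn[OF assms] core_dual_Rn[OF R'U] by simp_all
  have inv: "\<forall>p\<in>Jp (famV U R). core_dual U ?R' (core_dual U R p) = p"
    "\<forall>q\<in>Jp (famV U ?R'). core_dual U R (core_dual U ?R' q) = q"
    using core_dual_converse_core_dual[OF assms] core_dual_converse_core_dual[OF R'U] by simp_all
  have bij: "bij_betw (core_dual U R) (Jp (famV U R)) (Jp (famV U ?R'))"
    "bij_betw (core_dual U ?R') (Jp (famV U ?R')) (Jp (famV U R))"
    using bij_betw_core_dual[OF assms] bij_betw_core_dual[OF R'U] by simp_all
  have anti: "\<forall>p\<in>Jp (famV U R). \<forall>p'\<in>Jp (famV U R).
      p \<subseteq> p' \<longleftrightarrow> core_dual U R p' \<subseteq> core_dual U R p"
    "\<forall>q\<in>Jp (famV U ?R'). \<forall>q'\<in>Jp (famV U ?R').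
      q \<subseteq> q' \<longleftrightarrow> core_dual U ?R' q' \<subseteq> core_dual U ?R' q"
    using core_dual_antimono_iff[OF assms] core_dual_antimono_iff[OF R'U] by blast+
  show ?thesis unfolding famB_eq_famV_converse
    by (intro exI[of _ "core_dual U R"] exI[of _ "core_dual U ?R'"] conjI)
      (fact rep val bij inv anti)+
qed

end
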